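(* Let $K$ be an arbitrary field and let $p(s)=s^n+a_{n-1}s^{n-1}+\dots+a_0\in K[s]$ be a monic irreducible polynomial of degree $n$. Let $k\ge 1$ be an integer, and let $h\in K^q[s]$ and $g\in K^t[s]$ be polynomial vectors such that \[ W=h\,\frac{1}{p^k}\,g^T\in K^{q\times t}(s) \] is a coprime factorization. Write the $p$-adic expansions \[ h=h_0+h_1p+h_2p^2+\cdots,\qquad g=g_0+g_1p+g_2p^2+\cdots, \] where $h_i\in K^q[s]$, $g_i\in K^t[s]$ and every nonzero component of $h_i$ and of $g_i$ has degree $<n$. Let $b(s)=(1,s,\dots,s^{n-1})^T$. For each $i\ge 0$ define $H_i\in K^{q\times n}$ by $h_i(s)=H_i\,b(s)$, and define $G_i\in K^{t\times n}$ by $g_i(s)=G_i\,M\,b(s)$, where $M=M(p)$ is the $n\times n$ Hankel matrix defined in the context. Put \[ H=(H_0,H_1,\dots,H_{k-1})\in K^{q\times nk},\qquad G=\begin{pmatrix}G_{k-1}^T\\ \vdots\\ G_0^T\end{pmatrix}\in K^{nk\times t}. \] Then \[ \pi_-W=H\bigl(sI-J(p^k)\bigr)^{-1}G, \] and this realization is minimal, i.e. there is no triple $(F',G',H')$ with $F'$ square of size less than $nk$ and $H'(sI-F')^{-1}G'=\pi_-W$.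
   Context: $K(s)$ denotes the field of rational functions over $K$. A rational function $f$ is strictly proper if $f=0$ or $f=g/h$ with $g,h\in K[s]$, $gh\neq 0$, $\deg g<\deg h$. Every $f\in K(s)$ decomposes uniquely as $f=w+y$ with $w$ strictly proper and $y\in K[s]$; one sets $\pi_-f=w$, and $\pi_-$ is applied entrywise to vectors and matrices. The factorization $W=h\,p^{-k}\,g^T$ is called coprime if $h$ and $p^k$ are right coprime and $p^k$ and $g^T$ are left coprime; concretely, $p$ and the entries of $h$ have no nonconstant common factor, and $p$ and the entries of $g$ have no nonconstant common factor. The companion matrix of $p$ is the $n\times n$ matrix $C=C(p)$ with ones on the superdiagonal (entries $(i,i+1)$, $i=1,\dots,n-1$), last row $(-a_0,-a_1,\dots,-a_{n-1})$, and zeros elsewhere (if $n=1$, $p=s-\lambda$, then $C=(\lambda)$). Let $V=e_ne_1^T$ be the $n\times n$ matrix whose only nonzero entry is a $1$ in position $(n,1)$. Let $N_k$ be the $k\times k$ matrix with ones on the superdiagonal and zeros elsewhere. The Jacobson block of $p^k$ is the $nk\times nk$ block upper bidiagonal matrix \[ J(p^k)=I_k\otimes C+N_k\otimes V, \] i.e. $C$ in every diagonal block, $V$ in every block immediately above the diagonal, and zero blocks elsewhere; here $\otimes$ is the Kronecker product $A\otimes B=(a_{ij}B)$. $M=M(p)$ is the $n\times n$ matrix whose $(i,j)$ entry is $a_{i+j-1}$ if $i+j-1\le n-1$, equals $1$ if $i+j-1=n$, and equals $0$ if $i+j-1>n$; i.e. first row $(a_1,a_2,\dots,a_{n-1},1)$,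 second row $(a_2,\dots,a_{n-1},1,0)$, ..., last row $(1,0,\dots,0)$ (for $n=1$, $M=(1)$). $M$ is invertible, so $G_i$ is uniquely determined. *)

theory Defs
  imports "HOL-Computational_Algebra.Polynomial_Factorial" "Jordan_Normal_Form.Matrix"
begin

text \<open>Rational functions K(s) are modelled as the fraction field of K[s]: type 'a poly fract.\<close>

definition strictly_proper :: "'a::field poly fract \<Rightarrow> bool" where
  "strictly_proper f \<longleftrightarrow> f = 0 \<or>
     (\<exists>g h. g * h \<noteq> 0 \<and> degree g < degree h \<and> f = Fract g h)"

definition pi_minus :: "'a::field poly fract \<Rightarrow> 'a poly fract" where
  "pi_minus f = (THE w. strictly_proper w \<and> (\<exists>y. f = w + to_fract y))"

definition emb_mat :: "'a::field mat \<Rightarrow> 'a poly fract mat" where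
  "emb_mat A = map_mat (\<lambda>c. to_fract [:c:]) A"

definition var_s :: "'a::field poly fract" where
  "var_s = to_fract [:0, 1:]"

definition mat_inv :: "'b::field mat \<Rightarrow> 'b mat" where
  "mat_inv A = (THE B. B \<in> carrier_mat (dim_row A) (dim_row A) \<and> inverts_mat A B \<and> inverts_mat B A)"

definition resolvent :: "'a::field mat \<Rightarrow> 'a poly fract mat" where
  "resolvent F = mat_inv (var_s \<cdot>\<^sub>m 1\<^sub>m (dim_row F) - emb_mat F)"

definition kron :: "'b::times mat \<Rightarrow> 'b mat \<Rightarrow> 'b mat" where
  "kron A B = mat (dim_row A * dim_row B) (dim_col A * dim_col B)
     (\<lambda>(i, j). A $$ (i div dim_row B, j div dim_col B) * B $$ (i mod dim_row B, j mod dim_col B))"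

definition companion :: "'a::field poly \<Rightarrow> 'a mat" where
  "companion p = mat (degree p) (degree p)
     (\<lambda>(i, j). if j = i + 1 then 1 else if i = degree p - 1 then - coeff p j else 0)"

definition V_mat :: "nat \<Rightarrow> 'a::field mat" where
  "V_mat n = mat n n (\<lambda>(i, j). if i = n - 1 \<and> j = 0 then 1 else 0)"

definition N_mat :: "nat \<Rightarrow> 'a::field mat" where
  "N_mat k = mat k k (\<lambda>(i, j). if j = i + 1 then 1 else 0)"

definition jacobson_block :: "'a::field poly \<Rightarrow> nat \<Rightarrow> 'a mat" where
  "jacobson_block p k = kron (1\<^sub>m k) (companion p) + kron (N_mat k) (V_mat (degree p))"

text \<open>Hankel matrix M(p), 0-based: entry (i,j) corresponds to 1-based i+j-1 = i+j+1 here.\<close>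
definition hankel_M :: "'a::field poly \<Rightarrow> 'a mat" where
  "hankel_M p = mat (degree p) (degree p)
     (\<lambda>(i, j). if i + j + 1 \<le> degree p - 1 then coeff p (i + j + 1)
              else if i + j + 1 = degree p then 1 else 0)"

definition padic_digit :: "'a::field poly \<Rightarrow> nat \<Rightarrow> 'a poly \<Rightarrow> 'a poly" where
  "padic_digit p i f = (f div p ^ i) mod p"

definition padic_vec :: "'a::field poly \<Rightarrow> nat \<Rightarrow> 'a poly vec \<Rightarrow> 'a poly vec" where
  "padic_vec p i v = map_vec (padic_digit p i) v"

definition bvec :: "nat \<Rightarrow> 'a::field poly vec" where
  "bvec n = vec n (\<lambda>j. monom 1 j)"

definition const_mat :: "'a::field mat \<Rightarrow> 'a poly mat" where
  "const_mat A = map_mat (\<lambda>c. [:c:]) A"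

definition coprime_fact :: "'a::field poly \<Rightarrow> nat \<Rightarrow> 'a poly vec \<Rightarrow> 'a poly vec \<Rightarrow> bool" where
  "coprime_fact p k h g \<longleftrightarrow>
     (\<forall>d. d dvd p ^ k \<and> (\<forall>i < dim_vec h. d dvd h $ i) \<longrightarrow> degree d = 0) \<and>
     (\<forall>d. d dvd p ^ k \<and> (\<forall>i < dim_vec g. d dvd g $ i) \<longrightarrow> degree d = 0)"

end

theory Submission
  imports Defs "Jordan_Normal_Form.Char_Poly"
begin

text \<open>Let T_j = (h mod p^j) / p^j be the strictly proper part of h / p^j, so that
  T_(j+1) p = h_j + T_j. Together with Horner's scheme for p and for the digit h_j this shows
  that the row vector whose block j consists of T_(j+1) Q_(l+1) - U_(l+1), l < n, where Q and U
  are the Horner tails of p and of h_j, solves Y (sI - J(p^k)) = H. The rows of M(p) are the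
  Horner tails of p, so Y G is sum_j T_(j+1) g_(k-1-j) up to a polynomial. Modulo p^k the digit
  g_m only sees h modulo p^(k-m), hence h g / p^k is the same sum up to a polynomial; since
  realizations are strictly proper, H (sI - J(p^k))^-1 G = Y G is pi_- W.

  For minimality, every entry of a realization of size m is a fraction over the characteristic
  polynomial of the state matrix, of degree m, whereas coprimality provides an entry
  h_r g_c / p^k with p not dividing h_r g_c; so p^k divides that characteristic polynomial.\<close>

section \<open>Strictly proper rational functions\<close>

definition deg_below :: "'a::zero poly \<Rightarrow> nat \<Rightarrow> bool" where
  "deg_below a d \<longleftrightarrow> a = 0 \<or> degree a < d"

lemma deg_below_0 [simp]: "deg_below 0 d"
  by (simp add: deg_below_def)

lemma deg_below_diff:
  fixes a b :: "'a::ab_group_add poly"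
  assumes "deg_below a d" "deg_below b d"
  shows "deg_below (a - b) d"
  using assms degree_diff_le_max[of a b] unfolding deg_below_def
  by (cases "a - b = 0") auto

lemma deg_below_mult:
  fixes a c :: "'a::idom poly"
  assumes "deg_below a d"
  shows "deg_below (c * a) (degree c + d)"
  using assms unfolding deg_below_def by (cases "c = 0 \<or> a = 0") (auto simp: degree_mult_eq)

lemma deg_below_smult: "deg_below a d \<Longrightarrow> deg_below (Polynomial.smult c a) d"
  unfolding deg_below_def by (auto simp: le_less_trans[OF degree_smult_le])

lemma deg_below_sum:
  fixes f :: "'b \<Rightarrow> 'a::ab_group_add poly"
  shows "(\<And>x. x \<in> A \<Longrightarrow> deg_below (f x) d) \<Longrightarrow> deg_below (sum f A) d"
proof (induction A rule: infinite_finite_induct)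
  case (insert x A)
  then show ?case
    using deg_below_diff[of "f x" d "- sum f A"] by (simp add: deg_below_def)
qed simp_all

lemma strictly_proper_iff:
  "strictly_proper w \<longleftrightarrow>
     (\<exists>a b. b \<noteq> 0 \<and> deg_below a (degree b) \<and> w = to_fract a / to_fract b)"
proof
  assume "strictly_proper w"
  then consider "w = 0" | a b where "a * b \<noteq> 0" "degree a < degree b" "w = Fract a b"
    unfolding strictly_proper_def by blast
  then show "\<exists>a b. b \<noteq> 0 \<and> deg_below a (degree b) \<and> w = to_fract a / to_fract b"
  proof cases
    case 1
    then show ?thesis by (intro exI[of _ 0] exI[of _ 1]) simp
  next
    case 2
    then show ?thesis by (intro exI[of _ a] exI[of _ b]) (auto simp: deg_below_def Fract_conv_to_fract)
  qed
next
  assume "\<exists>a b. b \<noteq> 0 \<and> deg_below a (degree b) \<and> w = to_fract a / to_fract b"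
  then show "strictly_proper w"
    unfolding strictly_proper_def deg_below_def by (auto simp: Fract_conv_to_fract)
qed

lemma strictly_proper_fraction:
  "b \<noteq> 0 \<Longrightarrow> deg_below a (degree b) \<Longrightarrow> strictly_proper (to_fract a / to_fract b)"
  using strictly_proper_iff by blast

lemma strictly_proper_diff:
  assumes "strictly_proper v" "strictly_proper w"
  shows "strictly_proper (v - w)"
proof -
  obtain a b where ab: "b \<noteq> 0" "deg_below a (degree b)" "v = to_fract a / to_fract b"
    using assms(1) strictly_proper_iff by blast
  obtain c d where cd: "d \<noteq> 0" "deg_below c (degree d)" "w = to_fract c / to_fract d"
    using assms(2) strictly_proper_iff by blast
  have "v - w = (to_fract a * to_fract d - to_fract c * to_fract b) / (to_fract b * to_fract d)"
    using ab cd by (simp add: diff_frac_eq)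
  also have "\<dots> = to_fract (d * a - b * c) / to_fract (b * d)"
    by (simp add: mult.commute)
  finally have eq: "v - w = to_fract (d * a - b * c) / to_fract (b * d)" .
  have "deg_below (d * a - b * c) (degree (b * d))"
    using deg_below_mult[OF ab(2), of d] deg_below_mult[OF cd(2), of b] ab cd
    by (intro deg_below_diff) (auto simp: degree_mult_eq add.commute)
  then show ?thesis
    unfolding eq using ab cd by (intro strictly_proper_fraction) auto
qed

lemma strictly_proper_to_fract_iff [simp]: "strictly_proper (to_fract y) \<longleftrightarrow> y = 0"
proof
  assume "strictly_proper (to_fract y)"
  then obtain a b where ab: "b \<noteq> 0" "deg_below a (degree b)" "to_fract y = to_fract a / to_fract b"
    using strictly_proper_iff by blast
  then have "y * b = a"
    by (simp add: eq_divide_eq flip: to_fract_mult)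
  with ab show "y = 0"
    unfolding deg_below_def by (cases "y = 0") (auto simp: degree_mult_eq)
qed (simp add: strictly_proper_def)

lemma pi_minus_eqI:
  assumes "strictly_proper w" "f = w + to_fract y"
  shows "pi_minus f = w"
  unfolding pi_minus_def
proof (rule the_equality)
  show "strictly_proper w \<and> (\<exists>y. f = w + to_fract y)"
    using assms by blast
next
  fix w' assume "strictly_proper w' \<and> (\<exists>y. f = w' + to_fract y)"
  then obtain y' where w': "strictly_proper w'" "f = w' + to_fract y'"
    by blast
  then have eq: "w' - w = to_fract (y - y')"
    using assms by (simp add: algebra_simps)
  have "strictly_proper (to_fract (y - y'))"
    using strictly_proper_diff[OF w'(1) assms(1)] by (simp only: eq)
  then have "y - y' = 0"
    by (simp only: strictly_proper_to_fract_iff)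
  then show "w' = w"
    using eq by simp
qed

section \<open>Resolvents and realizations\<close>

lemma index_mult_mat_sum:
  "A \<in> carrier_mat a b \<Longrightarrow> B \<in> carrier_mat b c \<Longrightarrow> i < a \<Longrightarrow> j < c \<Longrightarrow>
   (A * B) $$ (i, j) = (\<Sum>l<b. A $$ (i, l) * B $$ (l, j))"
  by (auto simp: index_mult_mat scalar_prod_def atLeast0LessThan intro: sum.cong)

lemma mat_inv_eqI:
  assumes A: "A \<in> carrier_mat n n" and B: "B \<in> carrier_mat n n"
    and AB: "A * B = 1\<^sub>m n" and BA: "B * A = 1\<^sub>m n"
  shows "mat_inv A = B"
  unfolding mat_inv_def
proof (rule the_equality)
  show "B \<in> carrier_mat (dim_row A) (dim_row A) \<and> inverts_mat A B \<and> inverts_mat B A"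
    using A B AB BA by (auto simp: inverts_mat_def)
next
  fix B' assume "B' \<in> carrier_mat (dim_row A) (dim_row A) \<and> inverts_mat A B' \<and> inverts_mat B' A"
  then have B': "B' \<in> carrier_mat n n" "B' * A = 1\<^sub>m n"
    using A by (auto simp: inverts_mat_def)
  have "B' = B' * (A * B)"
    using B'(1) unfolding AB by simp
  also have "\<dots> = (B' * A) * B"
    using A B B'(1) by (simp add: assoc_mult_mat)
  also have "\<dots> = B"
    using B B'(2) by simp
  finally show "B' = B" .
qed

interpretation to_fract: comm_ring_hom "to_fract :: 'a::field poly \<Rightarrow> 'a poly fract"
  by unfold_locales auto

lemma sI_minus_emb_mat_eq:
  assumes "F \<in> carrier_mat m m"
  shows "var_s \<cdot>\<^sub>m 1\<^sub>m m - emb_mat F = map_mat to_fract (char_poly_matrix F)"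
proof -
  have "[:- c:] = - [:c:]" "pCons (- c) 1 = [:0, 1:] - [:c:]" for c :: 'a
    by simp_all
  then have "to_fract [:- c:] = - to_fract [:c:]" "to_fract (pCons (- c) 1) = var_s - to_fract [:c:]"
    for c :: 'a
    unfolding var_s_def by (simp_all only: to_fract_uminus to_fract_diff)
  with assms show ?thesis
    by (intro eq_matI) (auto simp: char_poly_matrix_def emb_mat_def var_s_def)
qed

lemma smult_adj_mat_inverse:
  fixes A :: "'a::field mat"
  assumes A: "A \<in> carrier_mat n n" and det: "det A \<noteq> 0"
  shows "A * ((1 / det A) \<cdot>\<^sub>m adj_mat A) = 1\<^sub>m n"
    and "((1 / det A) \<cdot>\<^sub>m adj_mat A) * A = 1\<^sub>m n"
  using det
  unfolding mult_smult_distrib[OF A adj_mat(1)[OF A]] mult_smult_assoc_mat[OF adj_mat(1)[OF A] A]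
    adj_mat(2,3)[OF A]
  by (auto intro!: eq_matI)

lemma mat_inv_eq_smult_adj_mat:
  fixes A :: "'a::field mat"
  assumes A: "A \<in> carrier_mat n n" and det: "det A \<noteq> 0"
  shows "mat_inv A = (1 / det A) \<cdot>\<^sub>m adj_mat A"
  using adj_mat(1)[OF A] smult_adj_mat_inverse[OF assms]
  by (intro mat_inv_eqI[OF A]) auto

lemma adj_mat_map_to_fract:
  fixes A :: "'a::field poly mat"
  assumes "A \<in> carrier_mat n n"
  shows "adj_mat (map_mat to_fract A) = map_mat to_fract (adj_mat A)"
proof -
  have "mat_delete (map_mat to_fract A) i j = map_mat to_fract (mat_delete A i j)" for i j
    by (intro eq_matI) (auto simp: mat_delete_def)
  with assms show ?thesis
    by (intro eq_matI) (auto simp: adj_mat_def cofactor_def to_fract.hom_power)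
qed

definition resolvent_adj :: "'a::field mat \<Rightarrow> 'a poly fract mat" where
  "resolvent_adj F =
     (1 / to_fract (char_poly F)) \<cdot>\<^sub>m map_mat to_fract (adj_mat (char_poly_matrix F))"

lemma resolvent_eq_resolvent_adj:
  assumes F: "F \<in> carrier_mat m m"
  shows "resolvent F = resolvent_adj F"
    and "(var_s \<cdot>\<^sub>m 1\<^sub>m m - emb_mat F) * resolvent F = 1\<^sub>m m"
proof -
  let ?D = "map_mat to_fract (char_poly_matrix F)"
  have D: "?D \<in> carrier_mat m m"
    using F by simp
  have det: "det ?D = to_fract (char_poly F)"
    unfolding char_poly_def by (rule to_fract.hom_det)
  have "char_poly F \<noteq> 0"
    using degree_monic_char_poly[OF F] by auto
  then have det_nz: "det ?D \<noteq> 0"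
    unfolding det by simp
  have sI: "var_s \<cdot>\<^sub>m 1\<^sub>m m - emb_mat F = ?D"
    by (rule sI_minus_emb_mat_eq[OF F])
  have "resolvent F = mat_inv ?D"
    using F sI by (simp add: resolvent_def)
  also have "\<dots> = (1 / det ?D) \<cdot>\<^sub>m adj_mat ?D"
    by (rule mat_inv_eq_smult_adj_mat[OF D det_nz])
  finally have R: "resolvent F = (1 / det ?D) \<cdot>\<^sub>m adj_mat ?D" .
  then show "resolvent F = resolvent_adj F"
    unfolding resolvent_adj_def det adj_mat_map_to_fract[OF char_poly_matrix_closed[OF F]] .
  show "(var_s \<cdot>\<^sub>m 1\<^sub>m m - emb_mat F) * resolvent F = 1\<^sub>m m"
    unfolding sI R by (rule smult_adj_mat_inverse(1)[OF D det_nz])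
qed

lemma resolvent_carrier:
  assumes "F \<in> carrier_mat m m"
  shows "resolvent F \<in> carrier_mat m m"
  using adj_mat(1)[OF char_poly_matrix_closed[OF assms]]
  by (simp add: resolvent_eq_resolvent_adj[OF assms] resolvent_adj_def)

lemma deg_below_adj_char_poly_matrix:
  assumes F: "F \<in> carrier_mat m m" and ij: "i < m" "j < m"
  shows "deg_below (adj_mat (char_poly_matrix F) $$ (i, j)) m"
proof -
  let ?A = "mat_delete (char_poly_matrix F) j i"
  have A: "?A \<in> carrier_mat (m - 1) (m - 1)"
    using mat_delete_carrier[OF char_poly_matrix_closed[OF F]] .
  have "degree (?A $$ (a, b)) \<le> 1" if "a < m - 1" "b < m - 1" for a b
    using that F unfolding mat_delete_def
    by (auto simp: char_poly_matrix_def intro: degree_add_le)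
  then have "degree (det ?A) \<le> 1 * (m - 1)"
    by (rule degree_det_le[OF _ A])
  moreover have "adj_mat (char_poly_matrix F) $$ (i, j) = (- 1) ^ (j + i) * det ?A"
    using ij carrier_matD[OF char_poly_matrix_closed[OF F]] by (simp add: adj_mat_def cofactor_def)
  moreover have "degree ((- 1) ^ (j + i) * det ?A) = degree (det ?A)"
    by (cases "even (j + i)") auto
  ultimately show ?thesis
    using ij unfolding deg_below_def by auto
qed

lemma realization_entry_fraction:
  assumes F: "F \<in> carrier_mat m m" and H: "H \<in> carrier_mat q m" and G: "G \<in> carrier_mat m t"
    and rc: "r < q" "c < t"
  shows "\<exists>a. deg_below a m \<and>
    (emb_mat H * resolvent F * emb_mat G) $$ (r, c) = to_fract a / to_fract (char_poly F)"
proof -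
  let ?A = "adj_mat (char_poly_matrix F)"
  have A: "?A \<in> carrier_mat m m"
    using adj_mat(1)[OF char_poly_matrix_closed[OF F]] .
  have R: "resolvent F \<in> carrier_mat m m"
    using resolvent_carrier[OF F] .
  have eH: "emb_mat H \<in> carrier_mat q m" and eG: "emb_mat G \<in> carrier_mat m t"
    using H G unfolding emb_mat_def by auto
  define a where "a = (\<Sum>y<m. \<Sum>x<m. [:H $$ (r, x):] * ?A $$ (x, y) * [:G $$ (y, c):])"
  have "(emb_mat H * resolvent F * emb_mat G) $$ (r, c)
      = (\<Sum>y<m. (\<Sum>x<m. emb_mat H $$ (r, x) * resolvent F $$ (x, y)) * emb_mat G $$ (y, c))"
    using index_mult_mat_sum[OF mult_carrier_mat[OF eH R] eG rc]
      index_mult_mat_sum[OF eH R rc(1)] by simp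
  also have "\<dots> = (\<Sum>y<m. (\<Sum>x<m. to_fract [:H $$ (r, x):] *
      (to_fract (?A $$ (x, y)) / to_fract (char_poly F))) * to_fract [:G $$ (y, c):])"
    using H G A rc
    by (intro sum.cong refl)
      (simp add: emb_mat_def resolvent_eq_resolvent_adj[OF F] resolvent_adj_def)
  also have "\<dots> = to_fract a / to_fract (char_poly F)"
    unfolding a_def to_fract_sum to_fract_mult sum_divide_distrib sum_distrib_right
    by (simp add: ac_simps)
  finally have "(emb_mat H * resolvent F * emb_mat G) $$ (r, c) = to_fract a / to_fract (char_poly F)" .
  moreover have "deg_below a m"
    unfolding a_def using A deg_below_adj_char_poly_matrix[OF F]
    by (intro deg_below_sum) (simp add: deg_below_smult)
  ultimately show ?thesis
    by blast
qed

text \<open>The entry is a fraction over char_poly F, of degree m; comparing it with u / p^k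
  shows that p^k divides char_poly F.\<close>
lemma realization_size_ge:
  fixes p :: "'a::field poly"
  assumes F: "F \<in> carrier_mat m m" and H: "H \<in> carrier_mat q m" and G: "G \<in> carrier_mat m t"
    and rc: "r < q" "c < t"
    and p: "prime_elem p" "\<not> p dvd u"
    and entry: "(emb_mat H * resolvent F * emb_mat G) $$ (r, c) = to_fract u / to_fract (p ^ k) + to_fract y"
  shows "degree p * k \<le> m"
proof -
  obtain a where a: "(emb_mat H * resolvent F * emb_mat G) $$ (r, c) = to_fract a / to_fract (char_poly F)"
    using realization_entry_fraction[OF F H G rc] by blast
  have \<chi>: "char_poly F \<noteq> 0" "degree (char_poly F) = m"
    using degree_monic_char_poly[OF F] by auto
  have p0: "p \<noteq> 0"
    using p(1) by auto
  then have pk: "p ^ k \<noteq> 0"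
    by simp
  have "to_fract a / to_fract (char_poly F) = to_fract (u + y * p ^ k) / to_fract (p ^ k)"
    using entry pk unfolding a by (simp add: add_divide_distrib)
  then have "to_fract a * to_fract (p ^ k) = to_fract (u + y * p ^ k) * to_fract (char_poly F)"
    using \<chi>(1) pk by (subst (asm) frac_eq_eq) simp_all
  then have "a * p ^ k = (u + y * p ^ k) * char_poly F"
    by (simp only: to_fract_mult[symmetric] to_fract_eq_iff)
  then have dvd: "p ^ k dvd (u + y * p ^ k) * char_poly F"
    by (metis dvd_triv_right)
  have "p ^ k dvd char_poly F"
  proof (cases "k = 0")
    case False
    then have "\<not> p dvd u + y * p ^ k"
      using p(2) by (simp add: dvd_add_left_iff)
    with False show ?thesis
      using prime_power_dvd_multD[OF p(1) dvd] by simp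
  qed simp
  then have "degree (p ^ k) \<le> m"
    using dvd_imp_degree_le[OF _ \<chi>(1)] \<chi>(2) by simp
  then show ?thesis
    by (simp add: degree_power_eq[OF p0] mult.commute)
qed

section \<open>Horner tails and p-adic digits\<close>

definition horner_tail :: "nat \<Rightarrow> (nat \<Rightarrow> 'a::comm_semiring_1) \<Rightarrow> nat \<Rightarrow> 'a poly" where
  "horner_tail N c l = (\<Sum>a\<in>{l..<N}. monom (c a) (a - l))"

lemma coeff_horner_tail:
  "coeff (horner_tail N c l) m = (if l + m < N then c (l + m) else 0)"
proof -
  have "coeff (horner_tail N c l) m = (\<Sum>a\<in>{l..<N}. if a = l + m then c a else 0)"
    unfolding horner_tail_def coeff_sum coeff_monom by (rule sum.cong) auto
  then show ?thesis
    by simp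
qed

lemma horner_tail_self [simp]: "horner_tail N c N = 0"
  by (simp add: horner_tail_def)

lemma horner_tail_step:
  "l < N \<Longrightarrow> horner_tail N c l = [:c l:] + [:0, 1:] * horner_tail N c (Suc l)"
  by (rule poly_eqI) (auto simp: coeff_horner_tail coeff_pCons split: nat.splits)

lemma to_fract_horner_tail_step:
  fixes c :: "nat \<Rightarrow> 'a::field"
  assumes "l < N"
  shows "to_fract (horner_tail N c l) = to_fract [:c l:] + var_s * to_fract (horner_tail N c (Suc l))"
  unfolding var_s_def by (subst horner_tail_step[OF assms]) (simp only: to_fract_add to_fract_mult)

lemma horner_tail_coeff_0 [simp]: "horner_tail (Suc (degree p)) (coeff p) 0 = p"
  by (rule poly_eqI) (auto simp: coeff_horner_tail coeff_eq_0)

lemma horner_tail_coeff_degree [simp]: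
  "horner_tail (Suc (degree p)) (coeff p) (degree p) = [:lead_coeff p:]"
  by (simp add: horner_tail_step)

lemma const_mat_mult_bvec_index:
  assumes "A \<in> carrier_mat q n" "r < q"
  shows "(const_mat A *\<^sub>v bvec n) $ r = horner_tail n (\<lambda>a. A $$ (r, a)) 0"
  using assms
  by (simp add: const_mat_def bvec_def scalar_prod_def horner_tail_def atLeast0LessThan smult_monom)

lemma hankel_M_index:
  assumes "lead_coeff p = 1" "x < degree p" "m < degree p"
  shows "hankel_M p $$ (x, m) = coeff (horner_tail (Suc (degree p)) (coeff p) (Suc x)) m"
  using assms by (auto simp: hankel_M_def coeff_horner_tail coeff_eq_0)

lemma const_mat_mult_hankel_bvec_index:
  fixes p :: "'a::field poly"
  assumes monic: "lead_coeff p = 1" and G: "G \<in> carrier_mat t (degree p)" and c: "c < t"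
  shows "(const_mat (G * hankel_M p) *\<^sub>v bvec (degree p)) $ c =
    (\<Sum>x<degree p. Polynomial.smult (G $$ (c, x)) (horner_tail (Suc (degree p)) (coeff p) (Suc x)))"
proof (rule poly_eqI)
  fix m
  let ?n = "degree p" and ?Q = "\<lambda>x. horner_tail (Suc (degree p)) (coeff p) (Suc x)"
  have M: "hankel_M p \<in> carrier_mat ?n ?n"
    by (simp add: hankel_M_def)
  have high: "coeff (?Q x) m = 0" if "\<not> m < ?n" for x
    using that by (simp add: coeff_horner_tail)
  have "coeff ((const_mat (G * hankel_M p) *\<^sub>v bvec ?n) $ c) m
      = (if m < ?n then (\<Sum>x<?n. G $$ (c, x) * hankel_M p $$ (x, m)) else 0)"
    using G M c index_mult_mat_sum[OF G M c]
    by (simp add: const_mat_mult_bvec_index[of _ t] coeff_horner_tail)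
  also have "\<dots> = (\<Sum>x<?n. G $$ (c, x) * coeff (?Q x) m)"
    using high hankel_M_index[OF monic] by (auto intro: sum.cong)
  finally show "coeff ((const_mat (G * hankel_M p) *\<^sub>v bvec ?n) $ c) m =
      coeff (\<Sum>x<?n. Polynomial.smult (G $$ (c, x)) (?Q x)) m"
    by (simp add: coeff_sum)
qed

definition padic_frac :: "'a::field poly \<Rightarrow> nat \<Rightarrow> 'a poly \<Rightarrow> 'a poly fract" where
  "padic_frac p j f = to_fract (f mod p ^ j) / to_fract (p ^ j)"

lemma padic_frac_0 [simp]: "padic_frac p 0 f = 0"
  by (simp add: padic_frac_def)

lemma padic_frac_Suc:
  assumes "p \<noteq> 0"
  shows "padic_frac p (Suc j) f * to_fract p = to_fract (padic_digit p j f) + padic_frac p j f"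
proof -
  have "f mod p ^ Suc j = p ^ j * padic_digit p j f + f mod p ^ j"
    unfolding power_Suc2 padic_digit_def by (rule poly_mod_mult_right)
  with assms show ?thesis
    by (simp add: padic_frac_def power_Suc2 divide_simps)
qed

lemma padic_expansion:
  "f = (\<Sum>i<k. padic_digit p i f * p ^ i) + f div p ^ k * p ^ k"
proof (induction k)
  case (Suc k)
  have "f div p ^ k = f div p ^ Suc k * p + padic_digit p k f"
    unfolding padic_digit_def power_Suc2 poly_div_mult_right by simp
  then have "f div p ^ k * p ^ k = padic_digit p k f * p ^ k + f div p ^ Suc k * p ^ Suc k"
    by (simp add: algebra_simps)
  with Suc show ?case
    by (simp add: algebra_simps)
qed simp

text \<open>Modulo p^k, the m-th digit of g only sees f modulo p^(k-m).\<close>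
lemma power_dvd_mult_minus_padic_sum:
  "p ^ k dvd f * g - (\<Sum>m<k. (f mod p ^ (k - m)) * padic_digit p m g * p ^ m)"
proof -
  have summand: "p ^ k dvd (f - f mod p ^ (k - m)) * padic_digit p m g * p ^ m" if "m < k" for m
  proof -
    have "(f - f mod p ^ (k - m)) * p ^ m = p ^ k * (f div p ^ (k - m))"
      using that by (simp add: minus_mod_eq_mult_div algebra_simps flip: power_add)
    then show ?thesis
      by (metis dvd_mult2 dvd_triv_left mult.assoc mult.commute)
  qed
  have "f * g - (\<Sum>m<k. (f mod p ^ (k - m)) * padic_digit p m g * p ^ m)
      = (\<Sum>m<k. (f - f mod p ^ (k - m)) * padic_digit p m g * p ^ m) + p ^ k * (f * (g div p ^ k))"
    by (subst padic_expansion[of g p k])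
      (simp add: algebra_simps sum_distrib_left sum_subtractf)
  also have "p ^ k dvd \<dots>"
    using summand by (intro dvd_add dvd_sum) auto
  finally show ?thesis .
qed

lemma padic_split_product_fraction:
  assumes "p \<noteq> 0"
  shows "\<exists>y. to_fract (f * g) / to_fract (p ^ k) =
    (\<Sum>j<k. padic_frac p (Suc j) f * to_fract (padic_digit p (k - 1 - j) g)) + to_fract y"
proof -
  define N where "N = (\<Sum>m<k. (f mod p ^ (k - m)) * padic_digit p m g * p ^ m)"
  obtain y where y: "f * g = N + p ^ k * y"
    using power_dvd_mult_minus_padic_sum[of p k f g] unfolding N_def[symmetric]
    by (metis dvdE diff_add_cancel add.commute)
  have "to_fract N / to_fract (p ^ k) = (\<Sum>m<k. padic_frac p (k - m) f * to_fract (padic_digit p m g))"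
    unfolding N_def to_fract_sum sum_divide_distrib
  proof (intro sum.cong refl)
    fix m assume "m \<in> {..<k}"
    then have "p ^ k = p ^ (k - m) * p ^ m"
      by (simp flip: power_add)
    with assms show "to_fract (f mod p ^ (k - m) * padic_digit p m g * p ^ m) / to_fract (p ^ k) =
        padic_frac p (k - m) f * to_fract (padic_digit p m g)"
      by (simp add: padic_frac_def)
  qed
  also have "\<dots> = (\<Sum>j<k. padic_frac p (Suc j) f * to_fract (padic_digit p (k - 1 - j) g))"
    by (subst sum.nat_diff_reindex[symmetric]) (auto intro: sum.cong simp: Suc_diff_Suc)
  finally show ?thesis
    using assms y by (intro exI[of _ y]) (simp add: add_divide_distrib)
qed

section \<open>The Jacobson block\<close>

lemma Suc_eq_iff_div_mod:
  fixes x c n :: nat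
  assumes "0 < n"
  shows "Suc x = c \<longleftrightarrow>
    (c div n = x div n \<and> c mod n = Suc (x mod n)) \<or>
    (c div n = Suc (x div n) \<and> Suc (x mod n) = n \<and> c mod n = 0)"
proof
  assume "Suc x = c"
  then show "(c div n = x div n \<and> c mod n = Suc (x mod n)) \<or>
      (c div n = Suc (x div n) \<and> Suc (x mod n) = n \<and> c mod n = 0)"
    using assms by (auto simp: div_Suc mod_Suc split: if_splits)
next
  assume "(c div n = x div n \<and> c mod n = Suc (x mod n)) \<or>
      (c div n = Suc (x div n) \<and> Suc (x mod n) = n \<and> c mod n = 0)"
  then show "Suc x = c"
  proof (elim disjE conjE)
    assume "c div n = x div n" "c mod n = Suc (x mod n)"
    then show "Suc x = c"
      by (metis add_Suc_right div_mult_mod_eq)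
  next
    assume "c div n = Suc (x div n)" "Suc (x mod n) = n" "c mod n = 0"
    then have "c = x div n * n + Suc (x mod n)"
      by (metis add.commute add_0 div_mult_mod_eq mult_Suc)
    then show "Suc x = c"
      by (metis add_Suc_right div_mult_mod_eq)
  qed
qed

lemma eq_block_end_iff_div_mod:
  fixes x c n :: nat
  assumes "0 < n"
  shows "x = c div n * n + (n - 1) \<longleftrightarrow> x div n = c div n \<and> x mod n = n - 1"
proof -
  have block: "(c div n * n + d) div n = c div n \<and> (c div n * n + d) mod n = d" if "d < n" for d
    using that by simp
  have "(c div n * n + (n - 1)) div n = c div n \<and> (c div n * n + (n - 1)) mod n = n - 1"
    by (rule block) (use assms in simp)
  then show ?thesis
    using div_mult_mod_eq[of x n] by (metis add.commute)
qed

lemma jacobson_block_carrier: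
  "jacobson_block p k \<in> carrier_mat (degree p * k) (degree p * k)"
  by (simp add: jacobson_block_def kron_def companion_def N_mat_def V_mat_def mult.commute)

lemma jacobson_block_index:
  fixes p :: "'a::field poly"
  defines "n \<equiv> degree p"
  assumes n: "0 < n" and x: "x < n * k" and c: "c < n * k"
  shows "jacobson_block p k $$ (x, c) =
    (if Suc x = c then 1 else 0) - (if x = c div n * n + (n - 1) then coeff p (c mod n) else 0)"
proof -
  have k: "x div n < k" "c div n < k"
    using x c by (auto simp: less_mult_imp_div_less mult.commute)
  have "jacobson_block p k $$ (x, c) =
      (if x div n = c div n then companion p $$ (x mod n, c mod n) else 0) +
      (if c div n = Suc (x div n) then V_mat n $$ (x mod n, c mod n) else 0)"
    using x c k n
    by (simp add: jacobson_block_def kron_def companion_def N_mat_def V_mat_def n_def mult.commute)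
  also have "\<dots> = (if Suc x = c then 1 else 0) -
      (if x = c div n * n + (n - 1) then coeff p (c mod n) else 0)"
    using mod_less_divisor[OF n, of x] mod_less_divisor[OF n, of c]
    unfolding Suc_eq_iff_div_mod[OF n, of x c] eq_block_end_iff_div_mod[OF n, of x c]
    by (auto simp: companion_def V_mat_def n_def) (metis n n_def mod_less_divisor less_irrefl)
  finally show ?thesis .
qed

lemma block_index_less: "j < k \<Longrightarrow> l < n \<Longrightarrow> j * n + l < n * (k::nat)"
proof -
  assume "j < k" "l < n"
  then have "j * n + l < Suc j * n"
    by simp
  also have "\<dots> \<le> k * n"
    using \<open>j < k\<close> by (intro mult_right_mono) auto
  finally show ?thesis
    by (simp add: mult.commute)
qed

lemma sI_minus_jacobson_block_index:
  fixes p :: "'a::field poly"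
  defines "n \<equiv> degree p"
  assumes n: "0 < n" and x: "x < n * k" and c: "c < n * k"
  shows "(var_s \<cdot>\<^sub>m 1\<^sub>m (n * k) - emb_mat (jacobson_block p k)) $$ (x, c) =
    var_s * (if x = c then 1 else 0) - (if Suc x = c then 1 else 0)
    + (if x = c div n * n + (n - 1) then to_fract [:coeff p (c mod n):] else 0)"
proof -
  have "[:a - b:] = [:a:] - [:b:]" for a b :: 'a
    by simp
  then have const_diff: "to_fract [:a - b:] = to_fract [:a:] - to_fract [:b:]" for a b :: 'a
    by (simp only: to_fract_diff)
  have "jacobson_block p k $$ (x, c) = (if Suc x = c then 1 else 0) -
      (if x = c div n * n + (n - 1) then coeff p (c mod n) else 0)"
    using jacobson_block_index[of p x k c] n x c unfolding n_def by simp
  with x c jacobson_block_carrier[of p k] show ?thesis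
    by (simp add: emb_mat_def const_diff n_def flip: one_pCons)
qed

lemma mult_sI_minus_jacobson_block_index:
  fixes p :: "'a::field poly" and Y :: "'a poly fract mat"
  defines "n \<equiv> degree p"
  assumes n: "0 < n" and Y: "Y \<in> carrier_mat q (n * k)" and r: "r < q" and c: "c < n * k"
  shows "(Y * (var_s \<cdot>\<^sub>m 1\<^sub>m (n * k) - emb_mat (jacobson_block p k))) $$ (r, c) =
    Y $$ (r, c) * var_s - (if c = 0 then 0 else Y $$ (r, c - 1))
    + Y $$ (r, c div n * n + (n - 1)) * to_fract [:coeff p (c mod n):]"
proof -
  define e where "e = c div n * n + (n - 1)"
  have e: "e < n * k"
    using c n unfolding e_def by (intro block_index_less) (auto simp: less_mult_imp_div_less mult.commute)
  have D: "var_s \<cdot>\<^sub>m 1\<^sub>m (n * k) - emb_mat (jacobson_block p k) \<in> carrier_mat (n * k) (n * k)"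
    using jacobson_block_carrier[of p k] unfolding n_def emb_mat_def by auto
  have "(Y * (var_s \<cdot>\<^sub>m 1\<^sub>m (n * k) - emb_mat (jacobson_block p k))) $$ (r, c) =
      (\<Sum>x<n * k. Y $$ (r, x) * (var_s \<cdot>\<^sub>m 1\<^sub>m (n * k) - emb_mat (jacobson_block p k)) $$ (x, c))"
    by (rule index_mult_mat_sum[OF Y D r c])
  also have "\<dots> = (\<Sum>x<n * k. Y $$ (r, x) * (var_s * (if x = c then 1 else 0)
      - (if Suc x = c then 1 else 0) + (if x = e then to_fract [:coeff p (c mod n):] else 0)))"
    using sI_minus_jacobson_block_index[of p _ k c] n c unfolding n_def e_def by simp
  also have "\<dots> = Y $$ (r, c) * var_s - (if c = 0 then 0 else Y $$ (r, c - 1))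
      + Y $$ (r, e) * to_fract [:coeff p (c mod n):]"
  proof -
    have diag: "(\<Sum>x<n * k. Y $$ (r, x) * (var_s * (if x = c then 1 else 0))) = Y $$ (r, c) * var_s"
      using c by (simp add: if_distrib cong: if_cong)
    have shift: "(\<Sum>x<n * k. Y $$ (r, x) * (if Suc x = c then 1 else 0)) =
        (if c = 0 then 0 else Y $$ (r, c - 1))"
    proof (cases c)
      case (Suc c')
      then have "(\<Sum>x<n * k. Y $$ (r, x) * (if Suc x = c then 1 else 0)) =
          (\<Sum>x<n * k. if x = c' then Y $$ (r, x) else 0)"
        by (intro sum.cong) auto
      with Suc c show ?thesis
        by simp
    qed simp
    have last: "(\<Sum>x<n * k. Y $$ (r, x) * (if x = e then to_fract [:coeff p (c mod n):] else 0)) =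
        Y $$ (r, e) * to_fract [:coeff p (c mod n):]"
      using e by (simp add: if_distrib cong: if_cong)
    show ?thesis
      by (simp only: distrib_left right_diff_distrib sum.distrib sum_subtractf diag shift last)
  qed
  finally show ?thesis
    unfolding e_def .
qed
section \<open>The realization of h p^-k g^T\<close>

lemma sum_lessThan_mult_blocks:
  "(\<Sum>x<n * k. f x) = (\<Sum>j<k. \<Sum>l<n. f (j * n + l :: nat))"
proof (induction k)
  case (Suc k)
  have "(\<Sum>x<n * Suc k. f x) = (\<Sum>x<n * k. f x) + (\<Sum>x\<in>{n * k..<n * k + n}. f x)"
    by (simp add: sum.atLeastLessThan_concat[symmetric] lessThan_atLeast0 algebra_simps)
  also have "(\<Sum>x\<in>{n * k..<n * k + n}. f x) = (\<Sum>l<n. f (k * n + l))"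
    using sum.shift_bounds_nat_ivl[of f 0 "n * k" n] by (simp add: lessThan_atLeast0 algebra_simps)
  finally show ?case
    using Suc by simp
qed simp

lemma coprime_fact_ex_not_dvd:
  assumes "coprime_fact p k h g" "0 < k" "0 < degree p"
  shows "\<exists>r<dim_vec h. \<not> p dvd h $ r" "\<exists>c<dim_vec g. \<not> p dvd g $ c"
proof -
  have "p dvd p ^ k"
    using assms(2) by (simp add: dvd_power)
  with assms(1,3) show "\<exists>r<dim_vec h. \<not> p dvd h $ r" "\<exists>c<dim_vec g. \<not> p dvd g $ c"
    unfolding coprime_fact_def by (metis less_irrefl)+
qed

locale padic_realization =
  fixes p :: "'a::field poly" and k q t :: nat
    and h g :: "'a poly vec" and Hs Gs :: "nat \<Rightarrow> 'a mat"
  assumes monic: "lead_coeff p = 1"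
    and degree_pos: "0 < degree p"
    and dimh: "dim_vec h = q" and dimg: "dim_vec g = t"
    and Hs_dim: "\<forall>i. Hs i \<in> carrier_mat q (degree p)"
    and Hs_def: "\<forall>i. padic_vec p i h = const_mat (Hs i) *\<^sub>v bvec (degree p)"
    and Gs_dim: "\<forall>i. Gs i \<in> carrier_mat t (degree p)"
    and Gs_def: "\<forall>i. padic_vec p i g = const_mat (Gs i * hankel_M p) *\<^sub>v bvec (degree p)"
begin

abbreviation n :: nat where "n \<equiv> degree p"

definition H :: "'a mat" where
  "H = mat q (n * k) (\<lambda>(r, c). Hs (c div n) $$ (r, c mod n))"

definition G :: "'a mat" where
  "G = mat (n * k) t (\<lambda>(r, c). Gs (k - 1 - r div n) $$ (c, r mod n))"

definition W :: "'a poly fract mat" where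
  "W = mat q t (\<lambda>(r, c). to_fract (h $ r) * to_fract (g $ c) / to_fract (p ^ k))"

abbreviation Q :: "nat \<Rightarrow> 'a poly" where
  "Q \<equiv> horner_tail (Suc n) (coeff p)"

abbreviation U :: "nat \<Rightarrow> nat \<Rightarrow> nat \<Rightarrow> 'a poly" where
  "U r j \<equiv> horner_tail n (\<lambda>a. Hs j $$ (r, a))"

abbreviation T :: "nat \<Rightarrow> nat \<Rightarrow> 'a poly fract" where
  "T r j \<equiv> padic_frac p j (h $ r)"

text \<open>Block j, position l of row r of H (sI - J(p^k))^-1 is y r j (Suc l). The values at
  the ends of a block, y r j 0 = T r j and y r j n = T r (Suc j), glue consecutive blocks.\<close>
definition y :: "nat \<Rightarrow> nat \<Rightarrow> nat \<Rightarrow> 'a poly fract" where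
  "y r j l = T r (Suc j) * to_fract (Q l) - to_fract (U r j l)"

definition Y :: "'a poly fract mat" where
  "Y = mat q (n * k) (\<lambda>(r, x). y r (x div n) (Suc (x mod n)))"

abbreviation realization :: "'a poly fract mat" where
  "realization \<equiv> emb_mat H * resolvent (jacobson_block p k) * emb_mat G"

lemma p_nonzero: "p \<noteq> 0"
  using degree_pos by auto

lemma padic_digit_h: "r < q \<Longrightarrow> padic_digit p j (h $ r) = U r j 0"
  using Hs_def Hs_dim dimh const_mat_mult_bvec_index[of "Hs j" q n r]
  by (metis index_map_vec(1) padic_vec_def)

lemma padic_digit_g:
  "c < t \<Longrightarrow> padic_digit p m (g $ c) = (\<Sum>x<n. Polynomial.smult (Gs m $$ (c, x)) (Q (Suc x)))"
  using Gs_def Gs_dim dimg const_mat_mult_hankel_bvec_index[OF monic, of "Gs m" t c]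
  by (metis index_map_vec(1) padic_vec_def)

lemma y_step:
  assumes "l < n"
  shows "y r j l = var_s * y r j (Suc l) + to_fract [:coeff p l:] * T r (Suc j)
    - to_fract [:Hs j $$ (r, l):]"
  using assms by (simp add: y_def to_fract_horner_tail_step algebra_simps)

lemma y_top: "y r j n = T r (Suc j)"
  using monic by (simp add: y_def flip: one_pCons)

lemma y_bottom: "r < q \<Longrightarrow> y r j 0 = T r j"
  using padic_frac_Suc[OF p_nonzero, of j "h $ r"] padic_digit_h[of r j]
  by (simp add: y_def algebra_simps)

lemma Y_carrier: "Y \<in> carrier_mat q (n * k)"
  by (simp add: Y_def)

lemma Y_block_index: "r < q \<Longrightarrow> j < k \<Longrightarrow> l < n \<Longrightarrow> Y $$ (r, j * n + l) = y r j (Suc l)"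
  using block_index_less[of j k l n] by (simp add: Y_def)

lemma Y_shift:
  assumes r: "r < q" and c: "c < n * k"
  shows "(if c = 0 then 0 else Y $$ (r, c - 1)) = y r (c div n) (c mod n)"
proof -
  define j l where "j = c div n" and "l = c mod n"
  have c_eq: "c = j * n + l" and l: "l < n"
    using degree_pos unfolding j_def l_def by auto
  have j: "j < k"
    using c unfolding j_def l_def by (simp add: less_mult_imp_div_less mult.commute)
  consider "l \<noteq> 0" | "l = 0" "j = 0" | j' where "l = 0" "j = Suc j'"
    by (cases j) auto
  then show ?thesis
  proof cases
    case 1
    then have "c - 1 = j * n + (l - 1)"
      using c_eq by simp
    with 1 show ?thesis
      using Y_block_index[OF r j, of "l - 1"] l c_eq unfolding j_def[symmetric] l_def[symmetric] by simp
  next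
    case 2
    then show ?thesis
      using c_eq y_bottom[OF r] unfolding j_def[symmetric] l_def[symmetric] by simp
  next
    case 3
    then have "c - 1 = j' * n + (n - 1)"
      using c_eq degree_pos by (simp add: algebra_simps)
    with 3 show ?thesis
      using Y_block_index[OF r, of j' "n - 1"] j degree_pos y_top y_bottom[OF r] c_eq
      unfolding j_def[symmetric] l_def[symmetric] by simp
  qed
qed

lemma Y_mult_sI_minus_jacobson_block:
  "Y * (var_s \<cdot>\<^sub>m 1\<^sub>m (n * k) - emb_mat (jacobson_block p k)) = emb_mat H"
proof (rule eq_matI)
  fix r c assume "r < dim_row (emb_mat H)" "c < dim_col (emb_mat H)"
  then have r: "r < q" and c: "c < n * k"
    by (simp_all add: H_def emb_mat_def)
  define j l where "j = c div n" and "l = c mod n"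
  have c_eq: "c = j * n + l" and l: "l < n"
    using degree_pos unfolding j_def l_def by auto
  have j: "j < k"
    using c unfolding j_def l_def by (simp add: less_mult_imp_div_less mult.commute)
  have "(Y * (var_s \<cdot>\<^sub>m 1\<^sub>m (n * k) - emb_mat (jacobson_block p k))) $$ (r, c)
      = y r j (Suc l) * var_s - y r j l + T r (Suc j) * to_fract [:coeff p l:]"
    using mult_sI_minus_jacobson_block_index[OF degree_pos Y_carrier r c] Y_shift[OF r c]
      Y_block_index[OF r j l] Y_block_index[OF r j, of "n - 1"] degree_pos y_top
    unfolding j_def[symmetric] l_def[symmetric] c_eq[symmetric] by simp
  also have "\<dots> = to_fract [:Hs j $$ (r, l):]"
    using y_step[OF l, of r j] by (simp add: algebra_simps)
  also have "\<dots> = emb_mat H $$ (r, c)"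
    using r c by (simp add: H_def emb_mat_def j_def l_def)
  finally show "(Y * (var_s \<cdot>\<^sub>m 1\<^sub>m (n * k) - emb_mat (jacobson_block p k))) $$ (r, c)
      = emb_mat H $$ (r, c)" .
qed (use jacobson_block_carrier[of p k] in \<open>auto simp: H_def Y_def emb_mat_def\<close>)

lemma emb_mat_H_mult_resolvent: "emb_mat H * resolvent (jacobson_block p k) = Y"
proof -
  let ?D = "var_s \<cdot>\<^sub>m 1\<^sub>m (n * k) - emb_mat (jacobson_block p k)"
  have J: "jacobson_block p k \<in> carrier_mat (n * k) (n * k)"
    by (rule jacobson_block_carrier)
  have D: "?D \<in> carrier_mat (n * k) (n * k)"
    using J unfolding emb_mat_def by auto
  have "emb_mat H * resolvent (jacobson_block p k) = Y * ?D * resolvent (jacobson_block p k)"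
    by (simp add: Y_mult_sI_minus_jacobson_block)
  also have "\<dots> = Y * (?D * resolvent (jacobson_block p k))"
    using Y_carrier D resolvent_carrier[OF J] by (rule assoc_mult_mat)
  also have "\<dots> = Y"
    using Y_carrier by (simp add: resolvent_eq_resolvent_adj(2)[OF J])
  finally show ?thesis .
qed

lemma realization_index_eq_padic_sum:
  assumes r: "r < q" and c: "c < t"
  shows "\<exists>z. realization $$ (r, c) =
    (\<Sum>j<k. T r (Suc j) * to_fract (padic_digit p (k - 1 - j) (g $ c))) + to_fract z"
proof -
  let ?G = "\<lambda>j l. Gs (k - 1 - j) $$ (c, l)"
  have eG: "emb_mat G \<in> carrier_mat (n * k) t"
    unfolding G_def emb_mat_def by auto
  have G_index: "emb_mat G $$ (j * n + l, c) = to_fract [:?G j l:]" if "j < k" "l < n" for j l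
    using that c block_index_less[OF that] by (simp add: G_def emb_mat_def)
  have digit: "to_fract (padic_digit p (k - 1 - j) (g $ c)) =
      (\<Sum>l<n. to_fract [:?G j l:] * to_fract (Q (Suc l)))" for j
    unfolding padic_digit_g[OF c] to_fract_sum by (simp flip: to_fract_mult)
  have "realization $$ (r, c) = (Y * emb_mat G) $$ (r, c)"
    by (simp add: emb_mat_H_mult_resolvent)
  also have "\<dots> = (\<Sum>j<k. \<Sum>l<n. Y $$ (r, j * n + l) * emb_mat G $$ (j * n + l, c))"
    by (simp add: index_mult_mat_sum[OF Y_carrier eG r c] sum_lessThan_mult_blocks)
  also have "\<dots> = (\<Sum>j<k. \<Sum>l<n. y r j (Suc l) * to_fract [:?G j l:])"
    using Y_block_index[OF r] G_index by simp
  also have "\<dots> = (\<Sum>j<k. T r (Suc j) * to_fract (padic_digit p (k - 1 - j) (g $ c)))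
      + to_fract (- (\<Sum>j<k. \<Sum>l<n. Polynomial.smult (?G j l) (U r j (Suc l))))"
  proof -
    have "to_fract (Polynomial.smult a P) = to_fract [:a:] * to_fract P" for a and P :: "'a poly"
      by (simp flip: to_fract_mult)
    then show ?thesis
      unfolding digit y_def by (simp add: algebra_simps sum_subtractf sum_distrib_left sum.distrib)
  qed
  finally show ?thesis
    by blast
qed

lemma W_index_eq_padic_sum:
  assumes r: "r < q" and c: "c < t"
  shows "\<exists>z. W $$ (r, c) =
    (\<Sum>j<k. T r (Suc j) * to_fract (padic_digit p (k - 1 - j) (g $ c))) + to_fract z"
  using padic_split_product_fraction[OF p_nonzero, of "h $ r" "g $ c" k] r c
  by (simp add: W_def)

lemma realization_strictly_proper:
  assumes "r < q" "c < t"
  shows "strictly_proper (realization $$ (r, c))"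
proof -
  have J: "jacobson_block p k \<in> carrier_mat (n * k) (n * k)"
    by (rule jacobson_block_carrier)
  obtain a where "deg_below a (n * k)"
    and "realization $$ (r, c) = to_fract a / to_fract (char_poly (jacobson_block p k))"
    using realization_entry_fraction[OF J _ _ assms, of H G] by (auto simp: H_def G_def)
  with degree_monic_char_poly[OF J] show ?thesis
    by (auto intro: strictly_proper_fraction)
qed

lemma W_eq_realization_plus_poly:
  assumes r: "r < q" and c: "c < t"
  shows "\<exists>z. W $$ (r, c) = realization $$ (r, c) + to_fract z"
proof -
  obtain z where z: "realization $$ (r, c) =
      (\<Sum>j<k. T r (Suc j) * to_fract (padic_digit p (k - 1 - j) (g $ c))) + to_fract z"
    using realization_index_eq_padic_sum[OF r c] by blast
  obtain z' where z': "W $$ (r, c) =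
      (\<Sum>j<k. T r (Suc j) * to_fract (padic_digit p (k - 1 - j) (g $ c))) + to_fract z'"
    using W_index_eq_padic_sum[OF r c] by blast
  have "W $$ (r, c) = realization $$ (r, c) + to_fract (z' - z)"
    unfolding z z' by simp
  then show ?thesis
    by blast
qed

theorem pi_minus_W_realization:
  "map_mat pi_minus W = realization"
proof (rule eq_matI)
  fix r c assume "r < dim_row realization" "c < dim_col realization"
  then have r: "r < q" and c: "c < t"
    by (simp_all add: H_def G_def emb_mat_def)
  obtain z where "W $$ (r, c) = realization $$ (r, c) + to_fract z"
    using W_eq_realization_plus_poly[OF r c] by blast
  then have "pi_minus (W $$ (r, c)) = realization $$ (r, c)"
    by (rule pi_minus_eqI[OF realization_strictly_proper[OF r c]])
  then show "map_mat pi_minus W $$ (r, c) = realization $$ (r, c)"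
    using r c by (simp add: W_def)
qed (simp_all add: W_def H_def G_def emb_mat_def)

theorem realization_minimal:
  assumes "prime_elem p" "0 < k" "coprime_fact p k h g"
  shows "\<not> (\<exists>m F' G' H'. m < n * k \<and> F' \<in> carrier_mat m m \<and> G' \<in> carrier_mat m t \<and>
    H' \<in> carrier_mat q m \<and> emb_mat H' * resolvent F' * emb_mat G' = map_mat pi_minus W)"
proof
  assume "\<exists>m F' G' H'. m < n * k \<and> F' \<in> carrier_mat m m \<and> G' \<in> carrier_mat m t \<and>
    H' \<in> carrier_mat q m \<and> emb_mat H' * resolvent F' * emb_mat G' = map_mat pi_minus W"
  then obtain m F' G' H' where m: "m < n * k" and F': "F' \<in> carrier_mat m m"
    and G': "G' \<in> carrier_mat m t" and H': "H' \<in> carrier_mat q m"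
    and eq: "emb_mat H' * resolvent F' * emb_mat G' = map_mat pi_minus W"
    by blast
  obtain r c where r: "r < q" "\<not> p dvd h $ r" and c: "c < t" "\<not> p dvd g $ c"
    using coprime_fact_ex_not_dvd[OF assms(3,2) degree_pos] dimh dimg by blast
  obtain z where z: "W $$ (r, c) = realization $$ (r, c) + to_fract z"
    using W_eq_realization_plus_poly[OF r(1) c(1)] by blast
  have "(emb_mat H' * resolvent F' * emb_mat G') $$ (r, c) =
      to_fract (h $ r * g $ c) / to_fract (p ^ k) + to_fract (- z)"
    using z r c by (simp add: eq pi_minus_W_realization) (simp add: W_def)
  moreover have "\<not> p dvd h $ r * g $ c"
    using assms(1) r(2) c(2) by (simp add: prime_elem_dvd_mult_iff)
  ultimately have "n * k \<le> m"
    using realization_size_ge[OF F' H' G' r(1) c(1) assms(1)] by blast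
  with m show False
    by simp
qed

end

theorem theorem4p1:
  fixes p :: "'a::field poly" and k q t :: nat
    and h g :: "'a poly vec" and Hs Gs :: "nat \<Rightarrow> 'a mat"
  assumes monic: "lead_coeff p = 1"
    and irr: "irreducible p"
    and k: "k \<ge> 1"
    and dimh: "dim_vec h = q" and dimg: "dim_vec g = t"
    and cop: "coprime_fact p k h g"
    and Hs_dim: "\<forall>i. Hs i \<in> carrier_mat q (degree p)"
    and Hs_def: "\<forall>i. padic_vec p i h = const_mat (Hs i) *\<^sub>v bvec (degree p)"
    and Gs_dim: "\<forall>i. Gs i \<in> carrier_mat t (degree p)"
    and Gs_def: "\<forall>i. padic_vec p i g = const_mat (Gs i * hankel_M p) *\<^sub>v bvec (degree p)"
  shows "let n = degree p;
             W = mat q t (\<lambda>(r, c). to_fract (h $ r) * to_fract (g $ c) / to_fract (p ^ k));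
             H = mat q (n * k) (\<lambda>(r, c). Hs (c div n) $$ (r, c mod n));
             G = mat (n * k) t (\<lambda>(r, c). Gs (k - 1 - r div n) $$ (c, r mod n))
         in map_mat pi_minus W = emb_mat H * resolvent (jacobson_block p k) * emb_mat G \<and>
            \<not> (\<exists>m F' G' H'. m < n * k \<and> F' \<in> carrier_mat m m \<and> G' \<in> carrier_mat m t \<and>
                 H' \<in> carrier_mat q m \<and>
                 emb_mat H' * resolvent F' * emb_mat G' = map_mat pi_minus W)"
proof -
  have prime: "prime_elem p"
    using irr by (rule field_poly_irreducible_imp_prime)
  then have "0 < degree p"
    by (metis gr0I is_unit_iff_degree prime_elem_def)
  then interpret padic_realization p k q t h g Hs Gs
    using assms by unfold_locales auto
  show ?thesis
    unfolding Let_def W_def[symmetric] H_def[symmetric] G_def[symmetric]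
    using pi_minus_W_realization realization_minimal[OF prime _ cop] k by simp
qed

end
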